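(* Let $k_+,k_-,t$ be integers with $0\leq k_-\leq k_+$, $k_++k_-\geq 1$ and $t>0$. Then for any real number $\epsilon>0$ there is an integer $\lambda$ and infinitely many values of $n$ such that $\mathbb{Z}^n$ can be $\lambda$-lattice-packed by $\mathcal{B}(n,t,k_+,k_-)$ with density $\delta=\Omega(n^{-\epsilon})$.
   Context: $\mathcal{B}(n,t,k_+,k_-)=\{\mathbf{x}\in\mathbb{Z}^n : -k_-\le x_i\le k_+ \text{ for all } i,\ \mathrm{wt}(\mathbf{x})\le t\}$, where $\mathrm{wt}$ is the Hamming weight. A set $\mathcal{B}\subseteq\mathbb{Z}^n$ $\lambda$-packs $\mathbb{Z}^n$ by a lattice $\Lambda\subseteq\mathbb{Z}^n$ if every $\mathbf{z}\in\mathbb{Z}^n$ lies in $\mathbf{v}+\mathcal{B}$ for at most $\lambda$ distinct $\mathbf{v}\in\Lambda$; the density is $|\mathcal{B}|/\mathrm{vol}(\Lambda)$ with $\mathrm{vol}(\Lambda)=|\mathbb{Z}^n/\Lambda|$. The asymptotic notation refers to $n\to\infty$ along these values, with $\epsilon,t,k_\pm$ fixed. *)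

theory Defs
  imports Complex_Main "HOL-Library.Function_Algebras"
begin

text \<open>Z^n is modelled as integer vectors indexed by nat, zero outside {0..<n}.\<close>
definition zvec :: "nat \<Rightarrow> (nat \<Rightarrow> int) set" where
  "zvec n = {x. \<forall>i\<ge>n. x i = 0}"

definition hwt :: "nat \<Rightarrow> (nat \<Rightarrow> int) \<Rightarrow> nat" where
  "hwt n x = card {i. i < n \<and> x i \<noteq> 0}"

definition ballB :: "nat \<Rightarrow> int \<Rightarrow> int \<Rightarrow> int \<Rightarrow> (nat \<Rightarrow> int) set" where
  "ballB n t kp km = {x \<in> zvec n. (\<forall>i<n. - km \<le> x i \<and> x i \<le> kp) \<and> int (hwt n x) \<le> t}"

definition is_lattice :: "nat \<Rightarrow> (nat \<Rightarrow> int) set \<Rightarrow> bool" where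
  "is_lattice n L \<longleftrightarrow> L \<subseteq> zvec n \<and> 0 \<in> L \<and> (\<forall>x\<in>L. \<forall>y\<in>L. x + y \<in> L) \<and> (\<forall>x\<in>L. - x \<in> L)"

definition quot :: "nat \<Rightarrow> (nat \<Rightarrow> int) set \<Rightarrow> (nat \<Rightarrow> int) set set" where
  "quot n L = zvec n // {(x, y). x \<in> zvec n \<and> y \<in> zvec n \<and> x - y \<in> L}"

definition lattice_vol :: "nat \<Rightarrow> (nat \<Rightarrow> int) set \<Rightarrow> nat" where
  "lattice_vol n L = card (quot n L)"

definition lambda_packs :: "nat \<Rightarrow> (nat \<Rightarrow> int) set \<Rightarrow> (nat \<Rightarrow> int) set \<Rightarrow> nat \<Rightarrow> bool" where
  "lambda_packs n B L lam \<longleftrightarrow>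
     (\<forall>z\<in>zvec n. card {v \<in> L. z \<in> (\<lambda>b. v + b) ` B} \<le> lam)"

definition density :: "(nat \<Rightarrow> int) set \<Rightarrow> nat \<Rightarrow> (nat \<Rightarrow> int) set \<Rightarrow> real" where
  "density B n L = real (card B) / real (lattice_vol n L)"

end

(*
  Let q be a prime larger than k_+ and L = {x. x H = 0 (mod q)} the kernel of an n x j matrix H
  over Z_q, so vol L <= q^j.  The lattice points v with z in v + B correspond to the points of B
  in the coset z - L, so it suffices to bound |B meet (z - L)|.  Call b_0, ..., b_R in B a
  triangular chain if each b_k is nonzero at a coordinate c_k where b_0, ..., b_(k-1) vanish.
  A subset of B without such a chain lies on at most T R coordinates (T = t), hence has at most
  (k_+ + k_- + 1)^(T R) elements.  If a chain lies in one coset, the rows c_1, ..., c_R of H are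
  determined by the other rows, because the pivots b_k(c_k) are invertible mod q; so at most
  q^((n - R) j) matrices do this to a given chain.  A union bound over the |B|^(R+1) chains yields
  a matrix without chains in any coset once |B|^(R+1) < q^(R j).  For n = q^(R m) we have
  |B| = O(n^T), so j = T m (R+1) + O(1) suffices, and for R >= T / epsilon the density
  |B| / q^j >= (n/T)^T / q^j is of order n^(-T/R) >= n^(-epsilon).
*)
theory Submission
  imports Defs "HOL-Library.FuncSet" "HOL-Library.Infinite_Set" "HOL-Computational_Algebra.Primes"
begin

section \<open>Vectors of bounded support\<close>

definition supported_funs :: "'a set \<Rightarrow> 'b::zero set \<Rightarrow> ('a \<Rightarrow> 'b) set" where
  "supported_funs W S = {x. (\<forall>i. i \<notin> W \<longrightarrow> x i = 0) \<and> (\<forall>i\<in>W. x i \<in> S)}"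

lemma supported_funs_subset_image_PiE:
  "supported_funs W S \<subseteq> (\<lambda>f i. if i \<in> W then f i else 0) ` PiE W (\<lambda>_. S)"
proof
  fix x assume x: "x \<in> supported_funs W S"
  then have "x = (\<lambda>i. if i \<in> W then restrict x W i else 0)"
    by (auto simp: supported_funs_def fun_eq_iff)
  moreover have "restrict x W \<in> PiE W (\<lambda>_. S)"
    using x by (auto simp: supported_funs_def)
  ultimately show "x \<in> (\<lambda>f i. if i \<in> W then f i else 0) ` PiE W (\<lambda>_. S)"
    by blast
qed

lemma finite_supported_funs:
  "finite W \<Longrightarrow> finite S \<Longrightarrow> finite (supported_funs W S)"
  by (rule finite_subset[OF supported_funs_subset_image_PiE]) (simp add: finite_PiE)

lemma card_supported_funs_le:
  assumes "finite W" "finite S"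
  shows "card (supported_funs W S) \<le> card S ^ card W"
proof -
  have "card (supported_funs W S) \<le> card ((\<lambda>f i. if i \<in> W then f i else 0) ` PiE W (\<lambda>_. S))"
    using assms by (intro card_mono supported_funs_subset_image_PiE) (simp add: finite_PiE)
  also have "\<dots> \<le> card (PiE W (\<lambda>_. S))"
    using assms by (intro card_image_le) (simp add: finite_PiE)
  also have "\<dots> = card S ^ card W"
    using assms by (simp add: card_PiE)
  finally show ?thesis .
qed

lemma supported_funs_mono:
  "V \<subseteq> W \<Longrightarrow> 0 \<in> S \<Longrightarrow> supported_funs V S \<subseteq> supported_funs W S"
  by (auto simp: supported_funs_def)

lemma ballB_mem_supported_funs:
  assumes "x \<in> ballB n t kp km"
  shows "x \<in> supported_funs {i. i < n \<and> x i \<noteq> 0} {-km..kp}"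
  using assms by (auto simp: ballB_def zvec_def supported_funs_def)

lemma card_support_ballB_le:
  assumes "x \<in> ballB n t kp km" "t \<le> int T"
  shows "card {i. i < n \<and> x i \<noteq> 0} \<le> T"
  using assms by (simp add: ballB_def hwt_def)

lemma finite_ballB: "finite (ballB n t kp km)"
proof (rule finite_subset)
  show "ballB n t kp km \<subseteq> supported_funs {..<n} (insert 0 {-km..kp})"
    by (auto simp: ballB_def zvec_def supported_funs_def)
qed (simp add: finite_supported_funs)

lemma binomial_le_card_ballB:
  assumes "0 \<le> km" "1 \<le> kp" "int T \<le> t"
  shows "n choose T \<le> card (ballB n t kp km)"
proof -
  define indicator_vec :: "nat set \<Rightarrow> nat \<Rightarrow> int" where
    "indicator_vec = (\<lambda>A i. if i \<in> A then 1 else 0)"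
  define subsets where "subsets = {A. A \<subseteq> {..<n} \<and> card A = T}"
  have "inj_on indicator_vec subsets"
  proof (rule inj_onI)
    fix A B assume "indicator_vec A = indicator_vec B"
    then have "i \<in> A \<longleftrightarrow> i \<in> B" for i
      by (auto simp: indicator_vec_def fun_eq_iff split: if_splits)
    then show "A = B" by blast
  qed
  moreover have "indicator_vec ` subsets \<subseteq> ballB n t kp km"
  proof
    fix x assume "x \<in> indicator_vec ` subsets"
    then obtain A where A: "A \<subseteq> {..<n}" "card A = T" and x: "x = indicator_vec A"
      by (auto simp: subsets_def)
    have "{i. i < n \<and> x i \<noteq> 0} = A"
      using A x by (auto simp: indicator_vec_def)
    then have "hwt n x = T"
      using A by (simp add: hwt_def)
    moreover have "x \<in> zvec n" "\<forall>i<n. - km \<le> x i \<and> x i \<le> kp"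
      using A x assms by (auto simp: zvec_def indicator_vec_def)
    ultimately show "x \<in> ballB n t kp km"
      using assms(3) unfolding ballB_def by simp
  qed
  ultimately have "card subsets \<le> card (ballB n t kp km)"
    by (rule card_inj_on_le[OF _ _ finite_ballB])
  moreover have "card subsets = n choose T"
    using n_subsets[of "{..<n}" T] by (simp add: subsets_def)
  ultimately show ?thesis by simp
qed

lemma card_subsets_card_le:
  assumes "1 \<le> n"
  shows "card {W. W \<subseteq> {..<n} \<and> card W \<le> T} \<le> Suc T * n ^ T"
proof -
  have "{W. W \<subseteq> {..<n} \<and> card W \<le> T} = (\<Union>i\<le>T. {W. W \<subseteq> {..<n} \<and> card W = i})"
    by auto
  then have "card {W. W \<subseteq> {..<n} \<and> card W \<le> T} \<le> (\<Sum>i\<le>T. card {W. W \<subseteq> {..<n} \<and> card W = i})"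
    by (simp add: card_UN_le)
  also have "\<dots> = (\<Sum>i\<le>T. n choose i)"
    by (simp add: n_subsets)
  also have "\<dots> \<le> (\<Sum>i\<le>T. n ^ T)"
  proof (rule sum_mono)
    fix i assume "i \<in> {..T}"
    then show "n choose i \<le> n ^ T"
      using binomial_le_pow[of i n] power_increasing[of i T n] assms
      by (cases "i \<le> n") (auto simp: binomial_eq_0)
  qed
  finally show ?thesis
    by simp
qed

lemma card_ballB_le:
  assumes "t \<le> int T" "0 \<le> km" "0 \<le> kp" "1 \<le> n"
  shows "card (ballB n t kp km) \<le> Suc T * nat (kp + km + 1) ^ T * n ^ T"
proof -
  define small where "small = {W. W \<subseteq> {..<n} \<and> card W \<le> T}"
  have "finite small"
    by (rule finite_subset[of _ "Pow {..<n}"]) (auto simp: small_def)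
  have fin_W: "finite W" if "W \<in> small" for W
    using that by (auto simp: small_def finite_nat_iff_bounded)
  have "ballB n t kp km \<subseteq> (\<Union>W\<in>small. supported_funs W {-km..kp})"
  proof
    fix x assume x: "x \<in> ballB n t kp km"
    then have "{i. i < n \<and> x i \<noteq> 0} \<in> small"
      using card_support_ballB_le[OF x assms(1)] by (simp add: small_def subset_iff)
    then show "x \<in> (\<Union>W\<in>small. supported_funs W {-km..kp})"
      using ballB_mem_supported_funs[OF x] by blast
  qed
  then have "card (ballB n t kp km) \<le> (\<Sum>W\<in>small. card (supported_funs W {-km..kp}))"
    using \<open>finite small\<close> fin_W
    by (intro order.trans[OF card_mono card_UN_le]) (auto intro: finite_supported_funs)
  also have "\<dots> \<le> (\<Sum>W\<in>small. nat (kp + km + 1) ^ T)"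
  proof (rule sum_mono)
    fix W assume W: "W \<in> small"
    have "card (supported_funs W {-km..kp}) \<le> card {-km..kp} ^ card W"
      using fin_W[OF W] by (intro card_supported_funs_le) auto
    also have "\<dots> \<le> nat (kp + km + 1) ^ T"
      using W assms(2,3) by (auto simp: small_def intro: power_increasing)
    finally show "card (supported_funs W {-km..kp}) \<le> nat (kp + km + 1) ^ T" .
  qed
  also have "\<dots> \<le> Suc T * n ^ T * nat (kp + km + 1) ^ T"
    using card_subsets_card_le[OF assms(4), of T] by (simp add: small_def)
  finally show ?thesis
    by (simp add: algebra_simps)
qed

lemma not_dvd_nonzero_entry_ballB:
  assumes "x \<in> ballB n t kp km" "i < n" "x i \<noteq> 0" "km \<le> kp" "kp < int q"
  shows "\<not> int q dvd x i"
proof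
  assume "int q dvd x i"
  then have "\<bar>int q\<bar> \<le> \<bar>x i\<bar>"
    using assms(3) by (rule dvd_imp_le_int[rotated])
  moreover have "\<bar>x i\<bar> < int q"
    using assms by (auto simp: ballB_def)
  ultimately show False
    by simp
qed

section \<open>Syndrome lattices\<close>

lemma card_translates_containing_le:
  fixes B L :: "'a::ab_group_add set"
  assumes "finite B"
  shows "card {v \<in> L. z \<in> (\<lambda>b. v + b) ` B} \<le> card {b \<in> B. z - b \<in> L}"
proof (rule card_inj_on_le)
  show "inj_on (\<lambda>v. z - v) {v \<in> L. z \<in> (\<lambda>b. v + b) ` B}"
    by (rule inj_onI) simp
  show "(\<lambda>v. z - v) ` {v \<in> L. z \<in> (\<lambda>b. v + b) ` B} \<subseteq> {b \<in> B. z - b \<in> L}"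
    by (auto simp: algebra_simps)
qed (simp add: assms)

lemma quot_nonempty: "quot n L \<noteq> {}"
proof -
  have "(0 :: nat \<Rightarrow> int) \<in> zvec n"
    by (simp add: zvec_def)
  then show ?thesis
    unfolding quot_def by (auto dest: quotientI)
qed

lemma is_lattice_diff: "is_lattice n L \<Longrightarrow> x \<in> L \<Longrightarrow> y \<in> L \<Longrightarrow> x - y \<in> L"
  unfolding is_lattice_def by (metis diff_conv_add_uminus)

definition syndrome_lattice :: "nat \<Rightarrow> nat \<Rightarrow> nat \<Rightarrow> (nat \<times> nat \<Rightarrow> int) \<Rightarrow> (nat \<Rightarrow> int) set" where
  "syndrome_lattice n j q H = {x \<in> zvec n. \<forall>r<j. int q dvd (\<Sum>i<n. x i * H (i, r))}"

definition syndrome :: "nat \<Rightarrow> nat \<Rightarrow> nat \<Rightarrow> (nat \<times> nat \<Rightarrow> int) \<Rightarrow> (nat \<Rightarrow> int) \<Rightarrow> nat \<Rightarrow> int" where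
  "syndrome n j q H x = (\<lambda>r\<in>{..<j}. (\<Sum>i<n. x i * H (i, r)) mod int q)"

lemma is_lattice_syndrome_lattice: "is_lattice n (syndrome_lattice n j q H)"
proof -
  let ?L = "syndrome_lattice n j q H"
  have "x + y \<in> ?L" if "x \<in> ?L" "y \<in> ?L" for x y
  proof -
    have "(\<Sum>i<n. (x + y) i * H (i, r)) = (\<Sum>i<n. x i * H (i, r)) + (\<Sum>i<n. y i * H (i, r))" for r
      by (simp add: sum.distrib distrib_right)
    with that show ?thesis
      by (simp add: syndrome_lattice_def zvec_def)
  qed
  moreover have "- x \<in> ?L" if "x \<in> ?L" for x
  proof -
    have "(\<Sum>i<n. (- x) i * H (i, r)) = - (\<Sum>i<n. x i * H (i, r))" for r
      by (simp add: sum_negf)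
    with that show ?thesis
      by (simp add: syndrome_lattice_def zvec_def)
  qed
  moreover have "?L \<subseteq> zvec n" "0 \<in> ?L"
    by (auto simp: syndrome_lattice_def zvec_def)
  ultimately show ?thesis
    by (simp add: is_lattice_def)
qed

lemma diff_in_syndrome_lattice_iff:
  assumes "x \<in> zvec n" "y \<in> zvec n"
  shows "x - y \<in> syndrome_lattice n j q H \<longleftrightarrow> syndrome n j q H x = syndrome n j q H y"
proof -
  have "(\<Sum>i<n. (x - y) i * H (i, r)) = (\<Sum>i<n. x i * H (i, r)) - (\<Sum>i<n. y i * H (i, r))" for r
    by (simp add: sum_subtractf left_diff_distrib)
  moreover have "x - y \<in> zvec n"
    using assms by (simp add: zvec_def)
  ultimately have "x - y \<in> syndrome_lattice n j q H \<longleftrightarrow>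
      (\<forall>r<j. (\<Sum>i<n. x i * H (i, r)) mod int q = (\<Sum>i<n. y i * H (i, r)) mod int q)"
    by (simp add: syndrome_lattice_def mod_eq_dvd_iff)
  also have "\<dots> \<longleftrightarrow> syndrome n j q H x = syndrome n j q H y"
    by (auto simp: syndrome_def restrict_def fun_eq_iff)
  finally show ?thesis .
qed

lemma
  assumes "q > 0"
  shows finite_quot_syndrome_lattice: "finite (quot n (syndrome_lattice n j q H))"
    and card_quot_syndrome_lattice_le: "card (quot n (syndrome_lattice n j q H)) \<le> q ^ j"
proof -
  let ?L = "syndrome_lattice n j q H"
  let ?fiber = "\<lambda>s. {y \<in> zvec n. syndrome n j q H y = s}"
  let ?syndromes = "PiE {..<j} (\<lambda>_. {0..<int q})"
  have "quot n ?L \<subseteq> ?fiber ` ?syndromes"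
  proof
    fix X assume "X \<in> quot n ?L"
    then obtain x where x: "x \<in> zvec n" and X: "X = {(x, y). x \<in> zvec n \<and> y \<in> zvec n \<and> x - y \<in> ?L} `` {x}"
      unfolding quot_def by (rule quotientE)
    have "X = ?fiber (syndrome n j q H x)"
      using diff_in_syndrome_lattice_iff[OF x] X x by auto
    moreover have "syndrome n j q H x \<in> ?syndromes"
      using assms by (simp add: syndrome_def)
    ultimately show "X \<in> ?fiber ` ?syndromes"
      by blast
  qed
  moreover have "finite ?syndromes" "card ?syndromes = q ^ j"
    by (simp_all add: finite_PiE card_PiE)
  ultimately show "finite (quot n ?L)" "card (quot n ?L) \<le> q ^ j"
    using card_mono[of "?fiber ` ?syndromes" "quot n ?L"] card_image_le[of ?syndromes ?fiber]
    by (auto intro: finite_subset)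
qed

section \<open>Triangular chains\<close>

definition triangular_chain :: "nat \<Rightarrow> nat \<Rightarrow> (nat \<Rightarrow> nat \<Rightarrow> int) \<Rightarrow> (nat \<Rightarrow> nat) \<Rightarrow> bool" where
  "triangular_chain n s b c \<longleftrightarrow> (\<forall>k\<in>{1..s}. c k < n \<and> b k (c k) \<noteq> 0 \<and> (\<forall>i<k. b i (c k) = 0))"

definition has_chain :: "nat \<Rightarrow> (nat \<Rightarrow> int) set \<Rightarrow> nat \<Rightarrow> bool" where
  "has_chain n F s \<longleftrightarrow> (\<exists>b c. (\<forall>k\<le>s. b k \<in> F) \<and> triangular_chain n s b c)"

lemma has_chain_0: "x \<in> F \<Longrightarrow> has_chain n F 0"
  unfolding has_chain_def triangular_chain_def by (intro exI[of _ "\<lambda>_. x"]) auto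

lemma maximal_chain_covers_support:
  assumes b: "\<forall>k\<le>s. b k \<in> F" and chain: "triangular_chain n s b c"
    and maximal: "\<not> has_chain n F (Suc s)"
    and x: "x \<in> F" and i: "i < n" "x i \<noteq> 0"
  shows "\<exists>k\<le>s. b k i \<noteq> 0"
proof (rule ccontr)
  assume new: "\<not> (\<exists>k\<le>s. b k i \<noteq> 0)"
  have "\<forall>k\<le>Suc s. (b(Suc s := x)) k \<in> F"
    using b x by (simp add: le_Suc_eq)
  moreover have "triangular_chain n (Suc s) (b(Suc s := x)) (c(Suc s := i))"
    using chain new i by (auto simp: triangular_chain_def le_Suc_eq less_Suc_eq_le)
  ultimately have "has_chain n F (Suc s)"
    unfolding has_chain_def by blast
  with maximal show False ..
qed

lemma card_le_if_chain_not_extendable: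
  assumes F: "F \<subseteq> ballB n t kp km" and T: "t \<le> int T" and "0 \<le> km" "0 \<le> kp"
    and chain: "has_chain n F s" and maximal: "\<not> has_chain n F (Suc s)"
  shows "card F \<le> nat (kp + km + 1) ^ (T * Suc s)"
proof -
  obtain b c where b: "\<forall>k\<le>s. b k \<in> F" and tri: "triangular_chain n s b c"
    using chain by (auto simp: has_chain_def)
  define W where "W = (\<Union>k\<le>s. {i. i < n \<and> b k i \<noteq> 0})"
  have "finite W"
    by (auto simp: W_def)
  have "card W \<le> (\<Sum>k\<le>s. card {i. i < n \<and> b k i \<noteq> 0})"
    unfolding W_def by (rule card_UN_le) simp
  also have "\<dots> \<le> (\<Sum>k\<le>s. T)"
    using b F card_support_ballB_le[OF _ T] by (intro sum_mono) blast
  finally have card_W: "card W \<le> T * Suc s"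
    by (simp add: mult.commute)
  have "F \<subseteq> supported_funs W {-km..kp}"
  proof
    fix x assume x: "x \<in> F"
    have "{i. i < n \<and> x i \<noteq> 0} \<subseteq> W"
      using maximal_chain_covers_support[OF b tri maximal x] by (auto simp: W_def)
    moreover have "x \<in> supported_funs {i. i < n \<and> x i \<noteq> 0} {-km..kp}"
      using x F by (intro ballB_mem_supported_funs) blast
    ultimately show "x \<in> supported_funs W {-km..kp}"
      using supported_funs_mono[of _ W "{-km..kp}"] assms(3,4) by auto
  qed
  then have "card F \<le> card (supported_funs W {-km..kp})"
    using \<open>finite W\<close> by (intro card_mono finite_supported_funs) auto
  also have "\<dots> \<le> nat (kp + km + 1) ^ card W"
    using card_supported_funs_le[of W "{-km..kp}"] \<open>finite W\<close> by simp
  also have "\<dots> \<le> nat (kp + km + 1) ^ (T * Suc s)"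
    using card_W assms(3,4) by (intro power_increasing) auto
  finally show ?thesis .
qed

lemma card_le_if_no_chain:
  assumes F: "F \<subseteq> ballB n t kp km" and T: "t \<le> int T" and "0 \<le> km" "0 \<le> kp"
    and no_chain: "\<not> has_chain n F R"
  shows "card F \<le> nat (kp + km + 1) ^ (T * R)"
proof (cases "F = {}")
  case False
  then have "has_chain n F 0"
    using has_chain_0 by blast
  then obtain s where "s < R" "has_chain n F s" "\<not> has_chain n F (Suc s)"
    using ex_least_nat_less[of "\<lambda>s. \<not> has_chain n F s" R] no_chain by blast
  then have "card F \<le> nat (kp + km + 1) ^ (T * Suc s)"
    using card_le_if_chain_not_extendable[OF F T assms(3,4)] by blast
  also have "\<dots> \<le> nat (kp + km + 1) ^ (T * R)"
    using \<open>s < R\<close> assms(3,4) by (intro power_increasing mult_le_mono2) auto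
  finally show ?thesis .
qed simp

lemma inj_on_triangular_chain:
  assumes "triangular_chain n s b c"
  shows "inj_on c {1..s}"
proof (rule linorder_inj_onI')
  fix k k' assume "k \<in> {1..s}" "k' \<in> {1..s}" "k < k'"
  then have "b k (c k) \<noteq> 0" "b k (c k') = 0"
    using assms by (auto simp: triangular_chain_def)
  then show "c k \<noteq> c k'"
    by auto
qed

section \<open>Matrices collapsing a chain into one coset\<close>

lemma eq_0_if_prime_dvd_mult_small:
  fixes p a d :: int
  assumes "prime p" "p dvd a * d" "\<not> p dvd a" "\<bar>d\<bar> < p"
  shows "d = 0"
proof (rule ccontr)
  assume "d \<noteq> 0"
  moreover have "p dvd d"
    using assms(1-3) by (simp add: prime_dvd_mult_iff)
  ultimately have "\<bar>p\<bar> \<le> \<bar>d\<bar>"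
    by (rule dvd_imp_le_int)
  with assms(4) show False
    by simp
qed

definition matrices :: "nat \<Rightarrow> nat \<Rightarrow> nat \<Rightarrow> (nat \<times> nat \<Rightarrow> int) set" where
  "matrices n j q = PiE ({..<n} \<times> {..<j}) (\<lambda>_. {0..<int q})"

definition collapsing_matrices ::
    "nat \<Rightarrow> nat \<Rightarrow> nat \<Rightarrow> nat \<Rightarrow> (nat \<Rightarrow> nat \<Rightarrow> int) \<Rightarrow> (nat \<times> nat \<Rightarrow> int) set" where
  "collapsing_matrices n j q R b =
     {H \<in> matrices n j q. \<forall>k\<in>{1..R}. b k - b 0 \<in> syndrome_lattice n j q H}"

lemma finite_matrices: "finite (matrices n j q)"
  by (simp add: matrices_def finite_PiE)

lemma card_matrices: "card (matrices n j q) = q ^ (n * j)"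
  by (simp add: matrices_def card_PiE card_cartesian_product)

lemma abs_diff_matrices_entries_less:
  assumes "H \<in> matrices n j q" "H' \<in> matrices n j q" "i < n" "r < j"
  shows "\<bar>H (i, r) - H' (i, r)\<bar> < int q"
proof -
  have "H (i, r) \<in> {0..<int q}" "H' (i, r) \<in> {0..<int q}"
    using assms by (auto simp: matrices_def PiE_iff)
  then show ?thesis
    by (simp add: abs_less_iff)
qed

lemma collapsing_matrices_dvd:
  assumes "H \<in> collapsing_matrices n j q R b" "k \<in> {1..R}" "r < j"
  shows "int q dvd (\<Sum>i<n. (b k i - b 0 i) * H (i, r))"
  using assms by (auto simp: collapsing_matrices_def syndrome_lattice_def)

lemma chain_sum_eq_pivot_term:
  fixes \<Delta> :: "nat \<Rightarrow> int"
  assumes chain: "triangular_chain n R b c" and k: "k \<in> {1..R}"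
    and vanish: "\<forall>i<n. i \<notin> c ` {k..R} \<longrightarrow> \<Delta> i = 0"
  shows "(\<Sum>i<n. (b k i - b 0 i) * \<Delta> i) = b k (c k) * \<Delta> (c k)"
proof -
  have pivot: "c k < n" "\<forall>i<k. b i (c k) = 0"
    using chain k by (auto simp: triangular_chain_def)
  have "(b k i - b 0 i) * \<Delta> i = 0" if i: "i \<in> {..<n} - {c k}" for i
  proof (cases "i \<in> c ` {k..R}")
    case True
    then obtain k' where k': "k' \<in> {k..R}" "i = c k'"
      by blast
    with i have "k < k'"
      by (metis Diff_iff atLeastAtMost_iff insertI1 le_neq_implies_less)
    then show ?thesis
      using chain k k' by (auto simp: triangular_chain_def)
  qed (use vanish i in simp)
  then have "(\<Sum>i<n. (b k i - b 0 i) * \<Delta> i) = (b k (c k) - b 0 (c k)) * \<Delta> (c k)"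
    using pivot(1) by (simp add: sum.remove sum.neutral)
  also have "b 0 (c k) = 0"
    using pivot(2) k by simp
  finally show ?thesis
    by simp
qed

lemma collapsing_matrices_agree_on_chain:
  assumes q: "prime q" and chain: "triangular_chain n R b c"
    and pivots: "\<forall>k\<in>{1..R}. \<not> int q dvd b k (c k)"
    and H: "H \<in> collapsing_matrices n j q R b" and H': "H' \<in> collapsing_matrices n j q R b"
    and agree: "\<forall>i<n. i \<notin> c ` {1..R} \<longrightarrow> (\<forall>r<j. H (i, r) = H' (i, r))"
    and "k \<in> {1..R}" and r: "r < j"
  shows "H (c k, r) = H' (c k, r)"
  using \<open>k \<in> {1..R}\<close>
proof (induction k rule: less_induct)
  case (less k)
  define \<Delta> where "\<Delta> i = H (i, r) - H' (i, r)" for i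
  have "c k < n"
    using chain less.prems by (auto simp: triangular_chain_def)
  have "int q dvd (\<Sum>i<n. (b k i - b 0 i) * H (i, r)) - (\<Sum>i<n. (b k i - b 0 i) * H' (i, r))"
    using collapsing_matrices_dvd[OF H less.prems r] collapsing_matrices_dvd[OF H' less.prems r]
    by (rule dvd_diff)
  also have "\<dots> = (\<Sum>i<n. (b k i - b 0 i) * \<Delta> i)"
    by (simp add: \<Delta>_def sum_subtractf right_diff_distrib)
  also have "\<dots> = b k (c k) * \<Delta> (c k)"
  proof (rule chain_sum_eq_pivot_term[OF chain less.prems], intro allI impI)
    fix i assume "i < n" and not_later: "i \<notin> c ` {k..R}"
    show "\<Delta> i = 0"
    proof (cases "i \<in> c ` {1..R}")
      case True
      then obtain k' where k': "k' \<in> {1..R}" "i = c k'"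
        by blast
      with not_later have "k' < k"
        by (metis atLeastAtMost_iff imageI not_le_imp_less)
      with k' show ?thesis
        using less.IH r by (simp add: \<Delta>_def)
    qed (use agree r \<open>i < n\<close> in \<open>simp add: \<Delta>_def\<close>)
  qed
  finally have "int q dvd b k (c k) * \<Delta> (c k)" .
  moreover have "\<bar>\<Delta> (c k)\<bar> < int q"
    using H H' \<open>c k < n\<close> r unfolding \<Delta>_def collapsing_matrices_def
    by (blast intro: abs_diff_matrices_entries_less)
  ultimately have "\<Delta> (c k) = 0"
    using q pivots less.prems by (intro eq_0_if_prime_dvd_mult_small[of "int q"]) auto
  then show ?case
    by (simp add: \<Delta>_def)
qed

lemma inj_on_restrict_collapsing_matrices:
  assumes q: "prime q" and chain: "triangular_chain n R b c"
    and pivots: "\<forall>k\<in>{1..R}. \<not> int q dvd b k (c k)"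
  shows "inj_on (\<lambda>H. restrict H (({..<n} - c ` {1..R}) \<times> {..<j})) (collapsing_matrices n j q R b)"
proof (rule inj_onI)
  fix H H' assume H: "H \<in> collapsing_matrices n j q R b" and H': "H' \<in> collapsing_matrices n j q R b"
    and eq: "restrict H (({..<n} - c ` {1..R}) \<times> {..<j}) = restrict H' (({..<n} - c ` {1..R}) \<times> {..<j})"
  have agree: "\<forall>i<n. i \<notin> c ` {1..R} \<longrightarrow> (\<forall>r<j. H (i, r) = H' (i, r))"
    using eq by (auto simp: restrict_def fun_eq_iff split: if_splits)
  show "H = H'"
  proof (rule PiE_ext)
    show "H \<in> PiE ({..<n} \<times> {..<j}) (\<lambda>_. {0..<int q})" "H' \<in> PiE ({..<n} \<times> {..<j}) (\<lambda>_. {0..<int q})"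
      using H H' by (simp_all add: collapsing_matrices_def matrices_def)
    fix p assume "p \<in> {..<n} \<times> {..<j}"
    then obtain i r where p: "p = (i, r)" "i < n" "r < j"
      by blast
    then show "H p = H' p"
      using agree collapsing_matrices_agree_on_chain[OF q chain pivots H H' agree]
      by (cases "i \<in> c ` {1..R}") auto
  qed
qed

lemma card_collapsing_matrices_le:
  assumes q: "prime q" and chain: "triangular_chain n R b c"
    and pivots: "\<forall>k\<in>{1..R}. \<not> int q dvd b k (c k)"
  shows "card (collapsing_matrices n j q R b) \<le> q ^ ((n - R) * j)"
proof -
  define rows where "rows = {..<n} - c ` {1..R}"
  have "c ` {1..R} \<subseteq> {..<n}"
    using chain by (auto simp: triangular_chain_def)
  moreover have "card (c ` {1..R}) = R"
    using card_image[OF inj_on_triangular_chain[OF chain]] by simp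
  ultimately have card_rows: "card rows = n - R"
    by (simp add: rows_def card_Diff_subset finite_subset)
  have "finite rows"
    by (simp add: rows_def)
  have "(\<lambda>H. restrict H (rows \<times> {..<j})) ` collapsing_matrices n j q R b
      \<subseteq> PiE (rows \<times> {..<j}) (\<lambda>_. {0..<int q})"
    unfolding image_subset_iff restrict_PiE_iff
    by (auto simp: collapsing_matrices_def matrices_def rows_def PiE_iff)
  with inj_on_restrict_collapsing_matrices[OF assms]
  have "card (collapsing_matrices n j q R b) \<le> card (PiE (rows \<times> {..<j}) (\<lambda>_. {0..<int q}))"
    unfolding rows_def[symmetric] by (rule card_inj_on_le) (simp add: \<open>finite rows\<close> finite_PiE)
  also have "\<dots> = q ^ ((n - R) * j)"
    by (simp add: card_PiE card_cartesian_product card_rows \<open>finite rows\<close>)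
  finally show ?thesis .
qed

section \<open>A lattice without chains in its cosets\<close>

definition ball_chains :: "nat \<Rightarrow> int \<Rightarrow> int \<Rightarrow> int \<Rightarrow> nat \<Rightarrow> (nat \<Rightarrow> nat \<Rightarrow> int) set" where
  "ball_chains n t kp km R = {b \<in> PiE {..R} (\<lambda>_. ballB n t kp km). \<exists>c. triangular_chain n R b c}"

lemma card_UN_collapsing_matrices_lt:
  assumes q: "prime q" "kp < int q" and "km \<le> kp"
    and count: "card (ballB n t kp km) ^ Suc R * q ^ ((n - R) * j) < q ^ (n * j)"
  shows "card (\<Union>b\<in>ball_chains n t kp km R. collapsing_matrices n j q R b) < card (matrices n j q)"
proof -
  let ?B = "ballB n t kp km"
  have "finite (PiE {..R} (\<lambda>_. ?B))"
    by (simp add: finite_PiE finite_ballB)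
  then have "card (\<Union>b\<in>ball_chains n t kp km R. collapsing_matrices n j q R b)
      \<le> (\<Sum>b\<in>ball_chains n t kp km R. card (collapsing_matrices n j q R b))"
    unfolding ball_chains_def by (intro card_UN_le) simp
  also have "\<dots> \<le> (\<Sum>b\<in>ball_chains n t kp km R. q ^ ((n - R) * j))"
  proof (rule sum_mono)
    fix b assume "b \<in> ball_chains n t kp km R"
    then obtain c where b: "\<forall>k\<le>R. b k \<in> ?B" and chain: "triangular_chain n R b c"
      by (auto simp: ball_chains_def)
    have "\<forall>k\<in>{1..R}. \<not> int q dvd b k (c k)"
    proof
      fix k assume k: "k \<in> {1..R}"
      then have "b k \<in> ?B" "c k < n" "b k (c k) \<noteq> 0"
        using b chain by (auto simp: triangular_chain_def)
      then show "\<not> int q dvd b k (c k)"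
        by (rule not_dvd_nonzero_entry_ballB[OF _ _ _ assms(3) q(2)])
    qed
    then show "card (collapsing_matrices n j q R b) \<le> q ^ ((n - R) * j)"
      using card_collapsing_matrices_le q(1) chain by blast
  qed
  also have "\<dots> \<le> card (PiE {..R} (\<lambda>_. ?B)) * q ^ ((n - R) * j)"
    using \<open>finite (PiE {..R} (\<lambda>_. ?B))\<close> by (simp add: ball_chains_def card_mono)
  also have "\<dots> < card (matrices n j q)"
    using count by (simp add: card_PiE card_matrices)
  finally show ?thesis .
qed

lemma chain_in_coset_imp_collapsing:
  assumes "has_chain n {b \<in> ballB n t kp km. z - b \<in> syndrome_lattice n j q H} R"
    and "H \<in> matrices n j q"
  shows "H \<in> (\<Union>b\<in>ball_chains n t kp km R. collapsing_matrices n j q R b)"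
proof -
  obtain b c where b: "\<forall>k\<le>R. b k \<in> ballB n t kp km \<and> z - b k \<in> syndrome_lattice n j q H"
    and chain: "triangular_chain n R b c"
    using assms(1) by (auto simp: has_chain_def)
  have chain_b: "restrict b {..R} \<in> ball_chains n t kp km R"
    using b chain by (auto simp: ball_chains_def triangular_chain_def)
  have "b k - b 0 \<in> syndrome_lattice n j q H" if "k \<le> R" for k
  proof -
    have "(z - b 0) - (z - b k) \<in> syndrome_lattice n j q H"
      by (rule is_lattice_diff[OF is_lattice_syndrome_lattice]) (use b that in auto)
    then show ?thesis
      by simp
  qed
  then have "H \<in> collapsing_matrices n j q R (restrict b {..R})"
    using assms(2) by (simp add: collapsing_matrices_def)
  with chain_b show ?thesis
    by blast
qed

lemma exists_matrix_without_chains: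
  assumes q: "prime q" "kp < int q" and "km \<le> kp"
    and count: "card (ballB n t kp km) ^ Suc R * q ^ ((n - R) * j) < q ^ (n * j)"
  shows "\<exists>H \<in> matrices n j q.
           \<forall>z. \<not> has_chain n {b \<in> ballB n t kp km. z - b \<in> syndrome_lattice n j q H} R"
proof -
  let ?bad = "\<Union>b\<in>ball_chains n t kp km R. collapsing_matrices n j q R b"
  have "?bad \<subseteq> matrices n j q"
    by (auto simp: collapsing_matrices_def)
  then have "finite ?bad"
    using finite_matrices by (rule finite_subset)
  then obtain H where H: "H \<in> matrices n j q" "H \<notin> ?bad"
    using card_UN_collapsing_matrices_lt[OF assms] card_mono[of ?bad "matrices n j q"]
    by (meson not_le subsetI)
  have "\<not> has_chain n {b \<in> ballB n t kp km. z - b \<in> syndrome_lattice n j q H} R" for z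
    using chain_in_coset_imp_collapsing[OF _ H(1)] H(2) by blast
  with H(1) show ?thesis
    by blast
qed

lemma exists_packing_lattice:
  assumes q: "prime q" "kp < int q" and "0 \<le> km" "km \<le> kp" and T: "t \<le> int T"
    and count: "card (ballB n t kp km) ^ Suc R * q ^ ((n - R) * j) < q ^ (n * j)"
  shows "\<exists>L. is_lattice n L \<and> finite (quot n L) \<and> card (quot n L) \<le> q ^ j \<and>
             lambda_packs n (ballB n t kp km) L (nat (kp + km + 1) ^ (T * R))"
proof -
  let ?B = "ballB n t kp km"
  obtain H where no_chain: "\<forall>z. \<not> has_chain n {b \<in> ?B. z - b \<in> syndrome_lattice n j q H} R"
    using exists_matrix_without_chains[OF q assms(4) count] by blast
  have "lambda_packs n ?B (syndrome_lattice n j q H) (nat (kp + km + 1) ^ (T * R))"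
    unfolding lambda_packs_def
  proof
    fix z
    have "card {v \<in> syndrome_lattice n j q H. z \<in> (\<lambda>b. v + b) ` ?B}
        \<le> card {b \<in> ?B. z - b \<in> syndrome_lattice n j q H}"
      by (rule card_translates_containing_le[OF finite_ballB])
    also have "\<dots> \<le> nat (kp + km + 1) ^ (T * R)"
      using no_chain assms(3,4) by (intro card_le_if_no_chain[OF _ T]) auto
    finally show "card {v \<in> syndrome_lattice n j q H. z \<in> (\<lambda>b. v + b) ` ?B}
        \<le> nat (kp + km + 1) ^ (T * R)" .
  qed
  moreover have "q > 0"
    using q(1) prime_gt_0_nat by blast
  ultimately show ?thesis
    using is_lattice_syndrome_lattice finite_quot_syndrome_lattice card_quot_syndrome_lattice_le
    by blast
qed

section \<open>Choice of the parameters\<close>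

lemma pow_Suc_mult_prime_power_lt:
  fixes q R m T A Bc :: nat
  assumes q: "2 \<le> q" and "1 \<le> R" "1 \<le> m" and n: "n = q ^ (R * m)" and Bc: "Bc \<le> A * n ^ T"
  shows "Bc ^ Suc R * q ^ ((n - R) * (T * m * Suc R + A * Suc R))
           < q ^ (n * (T * m * Suc R + A * Suc R))"
proof -
  let ?j = "T * m * Suc R + A * Suc R"
  have "A ^ Suc R < (2 ^ A) ^ Suc R"
    by (intro power_strict_mono less_exp) auto
  also have "\<dots> = 2 ^ (A * Suc R)"
    by (rule power_mult[symmetric])
  also have "\<dots> \<le> q ^ (A * Suc R)"
    using q by (simp add: power_mono)
  also have "\<dots> \<le> q ^ (R * (A * Suc R))"
    using q \<open>1 \<le> R\<close> by (intro power_increasing) auto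
  finally have A: "A ^ Suc R < q ^ (R * (A * Suc R))" .
  have "Bc ^ Suc R \<le> (A * n ^ T) ^ Suc R"
    using Bc by (intro power_mono) auto
  also have "\<dots> = A ^ Suc R * q ^ (R * (T * m * Suc R))"
  proof -
    have "R * m * T * Suc R = R * (T * m * Suc R)"
      by (simp add: algebra_simps)
    then show ?thesis
      by (metis n power_mult power_mult_distrib)
  qed
  also have "\<dots> < q ^ (R * (A * Suc R)) * q ^ (R * (T * m * Suc R))"
    using A q by simp
  also have "\<dots> = q ^ (R * ?j)"
    by (simp add: power_add[symmetric] algebra_simps)
  finally have "Bc ^ Suc R * q ^ ((n - R) * ?j) < q ^ (R * ?j) * q ^ ((n - R) * ?j)"
    using q by simp
  also have "R \<le> n"
  proof -
    have "R < 2 ^ R"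
      by (rule less_exp)
    also have "\<dots> \<le> q ^ R"
      using q by (simp add: power_mono)
    also have "\<dots> \<le> n"
      unfolding n using q \<open>1 \<le> m\<close> by (intro power_increasing) auto
    finally show ?thesis
      by simp
  qed
  then have "q ^ (R * ?j) * q ^ ((n - R) * ?j) = q ^ (n * ?j)"
    by (simp add: power_add[symmetric] add_mult_distrib[symmetric])
  finally show ?thesis .
qed

lemma density_ratio_ge:
  fixes q T R m d Bc V :: nat and \<epsilon> :: real
  assumes q: "2 \<le> q" and "1 \<le> T" and TR: "real T \<le> real R * \<epsilon>" and n: "n = q ^ (R * m)"
    and "T \<le> n" and Bc: "n choose T \<le> Bc" and V: "1 \<le> V" "V \<le> q ^ (T * m * Suc R + d)"
  shows "1 / (real T ^ T * real q ^ d) * real n powr (- \<epsilon>) \<le> real Bc / real V"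
proof -
  have "real q ^ (T * m) = real q powr real (T * m)"
    by (rule powr_realpow[symmetric]) (use q in simp)
  also have "\<dots> \<le> real q powr (real R * real m * \<epsilon>)"
    using q mult_right_mono[OF TR, of "real m"] by (intro powr_mono) (auto simp: ac_simps)
  also have "\<dots> = real n powr \<epsilon>"
    using q by (simp add: n powr_realpow[symmetric] powr_powr)
  finally have q_pow: "real q ^ (T * m) \<le> real n powr \<epsilon>" .
  have "T * m * Suc R + d = R * m * T + T * m + d"
    by (simp add: algebra_simps)
  then have V_bound: "real n ^ T * real q ^ (T * m) * real q ^ d = real (q ^ (T * m * Suc R + d))"
    by (simp only: n of_nat_power of_nat_mult power_add power_mult)
  have "0 < real n"
    using q n by simp
  have "1 / (real T ^ T * real q ^ d) * real n powr (- \<epsilon>)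
      \<le> 1 / (real T ^ T * real q ^ d) * (1 / real q ^ (T * m))"
    unfolding powr_minus_divide using q_pow q \<open>0 < real n\<close>
    by (intro mult_left_mono divide_left_mono) auto
  also have "\<dots> = (real n / real T) ^ T / (real n ^ T * real q ^ (T * m) * real q ^ d)"
    using \<open>0 < real n\<close> \<open>1 \<le> T\<close> by (simp add: power_divide)
  also have "\<dots> = (real n / real T) ^ T / real (q ^ (T * m * Suc R + d))"
    by (simp only: V_bound)
  also have "\<dots> \<le> real Bc / real V"
  proof (rule frac_le)
    have "(real n / real T) ^ T \<le> real (n choose T)"
      using \<open>T \<le> n\<close> by (rule binomial_ge_n_over_k_pow_k)
    also have "\<dots> \<le> real Bc"
      using Bc by simp
    finally show "(real n / real T) ^ T \<le> real Bc" .
    show "real V \<le> real (q ^ (T * m * Suc R + d))"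
      using V(2) by (simp only: of_nat_le_iff)
  qed (use V(1) in auto)
  finally show ?thesis .
qed

lemma ex_pos_nat_mult_ge:
  fixes x \<epsilon> :: real
  assumes "0 < \<epsilon>"
  shows "\<exists>R :: nat. 1 \<le> R \<and> x \<le> real R * \<epsilon>"
proof -
  obtain R :: nat where "x / \<epsilon> < real R"
    using reals_Archimedean2 by blast
  then have "x \<le> real (Suc R) * \<epsilon>"
    using assms by (simp add: pos_divide_less_eq algebra_simps)
  then show ?thesis
    by (intro exI[of _ "Suc R"]) simp
qed

lemma exists_dense_packing_lattice:
  fixes q T R m :: nat and \<epsilon> :: real
  assumes q: "prime q" "kp < int q" and k: "0 \<le> km" "km \<le> kp" "1 \<le> kp"
    and T: "t = int T" "1 \<le> T" and R: "1 \<le> R" "real T \<le> real R * \<epsilon>"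
    and n: "n = q ^ (R * m)" "1 \<le> m"
  shows "\<exists>L. is_lattice n L \<and> finite (quot n L) \<and>
             lambda_packs n (ballB n t kp km) L (nat (kp + km + 1) ^ (T * R)) \<and>
             (T \<le> n \<longrightarrow> 1 / (real T ^ T * real q ^ (Suc T * nat (kp + km + 1) ^ T * Suc R))
                          * real n powr (- \<epsilon>) \<le> density (ballB n t kp km) n L)"
proof -
  define A where "A = Suc T * nat (kp + km + 1) ^ T"
  \<comment> \<open>Large enough for \<open>q ^ (R * j) > (A * n ^ T) ^ Suc R\<close>, the union bound over chains.\<close>
  define j where "j = T * m * Suc R + A * Suc R"
  have "2 \<le> q"
    using q(1) by (rule prime_ge_2_nat)
  then have "card (ballB n t kp km) \<le> A * n ^ T"
    unfolding A_def using n k T by (intro card_ballB_le) auto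
  then have "card (ballB n t kp km) ^ Suc R * q ^ ((n - R) * j) < q ^ (n * j)"
    unfolding j_def by (rule pow_Suc_mult_prime_power_lt[OF \<open>2 \<le> q\<close> R(1) n(2) n(1)])
  then obtain L where L: "is_lattice n L" "finite (quot n L)" "card (quot n L) \<le> q ^ j"
      "lambda_packs n (ballB n t kp km) L (nat (kp + km + 1) ^ (T * R))"
    using exists_packing_lattice[OF q k(1,2)] T(1) by blast
  have "1 / (real T ^ T * real q ^ (A * Suc R)) * real n powr (- \<epsilon>) \<le> density (ballB n t kp km) n L"
    if "T \<le> n"
    unfolding density_def lattice_vol_def
  proof (rule density_ratio_ge[OF \<open>2 \<le> q\<close> T(2) R(2) n(1) that])
    show "n choose T \<le> card (ballB n t kp km)"
      using k q(2) T(1) by (intro binomial_le_card_ballB) auto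
    show "1 \<le> card (quot n L)"
      using L(2) quot_nonempty by (simp add: Suc_le_eq card_gt_0_iff)
    show "card (quot n L) \<le> q ^ (T * m * Suc R + A * Suc R)"
      using L(3) by (simp add: j_def)
  qed
  with L show ?thesis
    unfolding A_def by blast
qed

theorem corollary10:
  fixes kp km t :: int and \<epsilon> :: real
  assumes "0 \<le> km" and "km \<le> kp" and "kp + km \<ge> 1" and "t > 0" and "\<epsilon> > 0"
  shows "\<exists>lam :: nat. \<exists>S :: nat set. \<exists>L :: nat \<Rightarrow> (nat \<Rightarrow> int) set.
           infinite S \<and>
           (\<forall>n\<in>S. is_lattice n (L n) \<and> finite (quot n (L n)) \<and>
                    lambda_packs n (ballB n t kp km) (L n) lam) \<and>
           (\<exists>c > 0. \<exists>N0. \<forall>n\<in>S. n \<ge> N0 \<longrightarrow>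
                density (ballB n t kp km) n (L n) \<ge> c * real n powr (- \<epsilon>))"
proof -
  define T where "T = nat t"
  have T: "t = int T" "1 \<le> T"
    using \<open>t > 0\<close> by (auto simp: T_def)
  obtain R :: nat where R: "1 \<le> R" "real T \<le> real R * \<epsilon>"
    using ex_pos_nat_mult_ge[OF \<open>\<epsilon> > 0\<close>] by blast
  obtain q where "prime q" "nat kp < q"
    using bigger_prime by blast
  then have q: "prime q" "kp < int q"
    by arith+
  have "1 \<le> kp"
    using assms(2,3) by linarith
  define c where "c = 1 / (real T ^ T * real q ^ (Suc T * nat (kp + km + 1) ^ T * Suc R))"
  define S where "S = range (\<lambda>m. q ^ (R * Suc m))"
  have "\<forall>n\<in>S. \<exists>L. is_lattice n L \<and> finite (quot n L) \<and>
          lambda_packs n (ballB n t kp km) L (nat (kp + km + 1) ^ (T * R)) \<and>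
          (T \<le> n \<longrightarrow> c * real n powr (- \<epsilon>) \<le> density (ballB n t kp km) n L)"
    (is "\<forall>n\<in>S. \<exists>L. ?good n L")
  proof
    fix n assume "n \<in> S"
    then obtain m where "n = q ^ (R * Suc m)"
      by (auto simp: S_def)
    then show "\<exists>L. ?good n L"
      unfolding c_def by (rule exists_dense_packing_lattice[OF q assms(1,2) \<open>1 \<le> kp\<close> T R]) simp
  qed
  then obtain L where "\<forall>n\<in>S. ?good n (L n)"
    by (metis bchoice)
  moreover have "infinite S"
    unfolding S_def using prime_gt_1_nat[OF q(1)] R(1)
    by (intro range_inj_infinite) (auto simp: inj_def power_inject_exp)
  moreover have "c > 0"
    using prime_gt_0_nat[OF q(1)] T(2) by (simp add: c_def)
  ultimately show ?thesis
    by blast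
qed

end
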